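(* Let $X$ be a real Banach space, let $x\in S_X$ and $x^*\in S_{X^*}$ with $x^*(x)=1$. Let $(x_n^* )_{n\in\mathbb N}\subset B_{X^*}$ be a sequence such that $x^*$ is a $w^*$-cluster point of $(x_n^* )$ (every $w^*$-neighbourhood of $x^*$ contains $x_n^*$ for infinitely many $n$). Assume there is a sequence $(U_n)_{n\in\mathbb N}$ of relatively $w^*$-open subsets of $J(x)$ such that \[\bigcup_n U_n=\bigcup_n \overline{U_n}^{w^*}=J(x)\setminus\{x^*\}.\] Then there is a subsequence $(n_k)$ such that $x_{n_k}^*\to x^*$ in the $w^*$-topology as $k\to\infty$.
   Context: $B_X$, $S_X$ denote the closed unit ball and unit sphere; $J(x)=\{y^*\in S_{X^*}: y^*(x)=1\}$ for $x\in S_X$. *)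

theory Defs
  imports "HOL-Analysis.Analysis"
begin

definition weak_star :: "('a::real_normed_vector \<Rightarrow>\<^sub>L real) topology" where
  "weak_star = pullback_topology UNIV blinfun_apply
                 (product_topology (\<lambda>_. euclideanreal) UNIV)"

definition duality_set :: "'a::real_normed_vector \<Rightarrow> ('a \<Rightarrow>\<^sub>L real) set" where
  "duality_set x = {y. norm y = 1 \<and> blinfun_apply y x = 1}"

end

theory Submission
  imports Defs
begin

text \<open>Write \<open>K\<^sub>j\<close> for the weak-star closure of \<open>U\<^sub>j\<close>. The sets
  \<open>G\<^sub>j = {y. y x > 1 - 1/(j+1)} - K\<^sub>j\<close> are weak-star open neighbourhoods of \<open>xs\<close>, and by
  regularity there are decreasing open neighbourhoods \<open>V\<^sub>j\<close> of \<open>xs\<close> with closures inside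
  \<open>G\<^sub>j\<close>; pick \<open>r\<close> strictly increasing with \<open>xn (r j) \<in> V\<^sub>j\<close>. If \<open>xn \<circ> r\<close> left some
  neighbourhood of \<open>xs\<close> infinitely often, those terms would have a cluster point \<open>y \<noteq> xs\<close>
  in the unit ball, which is weak-star compact (Banach--Alaoglu). But \<open>y\<close> lies in every
  closure of \<open>V\<^sub>j\<close>, hence in every \<open>G\<^sub>j\<close>: so \<open>y x = 1\<close>, i.e. \<open>y \<in> J(x) - {xs}\<close>, while
  \<open>y\<close> avoids every \<open>K\<^sub>j\<close>, contradicting that the \<open>K\<^sub>j\<close> cover \<open>J(x) - {xs}\<close>.\<close>

lemma compactin_imp_cluster_point:
  assumes "compactin X K" "infinite S" "s ` S \<subseteq> K"
  shows "\<exists>y\<in>K. \<forall>Q. openin X Q \<longrightarrow> y \<in> Q \<longrightarrow> infinite {k\<in>S. s k \<in> Q}"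
proof (rule ccontr)
  assume "\<not> ?thesis"
  then obtain Q
    where Q: "\<And>y. y \<in> K \<Longrightarrow> openin X (Q y) \<and> y \<in> Q y \<and> finite {k\<in>S. s k \<in> Q y}"
    by metis
  then have "(\<forall>V\<in>Q ` K. openin X V) \<and> K \<subseteq> \<Union>(Q ` K)" by auto
  then obtain \<F> where "finite \<F>" "\<F> \<subseteq> Q ` K" "K \<subseteq> \<Union>\<F>"
    using assms(1) unfolding compactin_def by meson
  then obtain F where F: "finite F" "F \<subseteq> K" "K \<subseteq> \<Union>(Q ` F)"
    by (metis finite_subset_image)
  have "S \<subseteq> (\<Union>y\<in>F. {k\<in>S. s k \<in> Q y})"
    using F(3) assms(3) by blast
  moreover have "finite (\<Union>y\<in>F. {k\<in>S. s k \<in> Q y})"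
    using F(1,2) Q by blast
  ultimately show False
    using assms(2) finite_subset by blast
qed

lemma regular_space_nested_neighbourhoods:
  assumes "regular_space X" "\<And>j::nat. openin X (G j)" "\<And>j. a \<in> G j"
  obtains V where "\<And>j. openin X (V j)" "\<And>j. a \<in> V j" "\<And>j. X closure_of V j \<subseteq> G j" "decseq V"
proof -
  have "\<exists>W C. openin X W \<and> closedin X C \<and> a \<in> W \<and> W \<subseteq> C \<and> C \<subseteq> G j" for j
  proof -
    have "neighbourhood_base_of (closedin X) X"
      using assms(1) neighbourhood_base_of_closedin by blast
    then show ?thesis
      using assms(2,3) unfolding neighbourhood_base_of by meson
  qed
  then obtain W C where
    WC: "\<And>j. openin X (W j) \<and> closedin X (C j) \<and> a \<in> W j \<and> W j \<subseteq> C j \<and> C j \<subseteq> G j"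
    by metis
  show thesis
  proof
    show "openin X (\<Inter>(W ` {..j}))" "a \<in> \<Inter>(W ` {..j})" for j
      using WC by (auto intro: openin_Inter)
    show "X closure_of \<Inter>(W ` {..j}) \<subseteq> G j" for j
      using WC closure_of_minimal[of "\<Inter>(W ` {..j})" "C j" X] by blast
    show "decseq (\<lambda>j. \<Inter>(W ` {..j}))"
      by (auto simp: decseq_def)
  qed
qed

lemma strict_mono_choice:
  fixes P :: "nat \<Rightarrow> nat \<Rightarrow> bool"
  assumes "\<And>j. infinite {n::nat. P j n}"
  obtains r where "strict_mono r" "\<And>j. P j (r j)"
proof -
  have "\<exists>r. \<forall>j. P j (r j) \<and> r j < r (Suc j)"
  proof (rule dependent_nat_choice)
    show "\<exists>n. P 0 n" using assms[of 0] not_finite_existsD by blast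
    show "\<exists>m. P (Suc j) m \<and> n < m" for n j
      using assms[of "Suc j"] unfolding infinite_nat_iff_unbounded by blast
  qed
  then show thesis
    using that strict_mono_Suc_iff by blast
qed

lemma cluster_point_imp_limitin_subsequence:
  fixes f :: "nat \<Rightarrow> 'a"
  assumes X: "regular_space X"
    and K: "compactin X K" "range f \<subseteq> K"
    and G: "\<And>j::nat. openin X (G j)" "\<And>j. a \<in> G j" "K \<inter> (\<Inter>j. G j) \<subseteq> {a}"
    and cluster: "\<And>V. openin X V \<Longrightarrow> a \<in> V \<Longrightarrow> infinite {n. f n \<in> V}"
  shows "\<exists>r. strict_mono r \<and> limitin X (f \<circ> r) a sequentially"
proof -
  obtain V where V: "\<And>j. openin X (V j)" "\<And>j. a \<in> V j" "\<And>j. X closure_of V j \<subseteq> G j" "decseq V"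
    using regular_space_nested_neighbourhoods[of X G a, OF X G(1) G(2)] by blast
  obtain r where r: "strict_mono r" "\<And>j. f (r j) \<in> V j"
    using strict_mono_choice[of "\<lambda>j n. f n \<in> V j"] cluster V(1,2) by blast
  have "limitin X (f \<circ> r) a sequentially"
    unfolding limitin_sequentially
  proof (intro conjI allI impI)
    show "a \<in> topspace X"
      using G(1,2) openin_subset by blast
    fix U assume U: "openin X U \<and> a \<in> U"
    show "\<exists>N. \<forall>n\<ge>N. (f \<circ> r) n \<in> U"
    proof (rule ccontr)
      assume "\<nexists>N. \<forall>n\<ge>N. (f \<circ> r) n \<in> U"
      then have S: "infinite {k. f (r k) \<notin> U}"
        by (simp add: infinite_nat_iff_unbounded_le not_le)
      have "(f \<circ> r) ` {k. f (r k) \<notin> U} \<subseteq> K"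
        using K(2) by auto
      then obtain y where y: "y \<in> K"
          "\<And>Q. openin X Q \<Longrightarrow> y \<in> Q \<Longrightarrow> infinite {k \<in> {k. f (r k) \<notin> U}. (f \<circ> r) k \<in> Q}"
        using compactin_imp_cluster_point[OF K(1) S] by blast
      have "y \<notin> U"
      proof
        assume "y \<in> U"
        then have "infinite {k \<in> {k. f (r k) \<notin> U}. (f \<circ> r) k \<in> U}"
          using y(2) U by blast
        then show False
          by simp
      qed
      moreover have "y \<in> G j" for j
      proof -
        have "\<exists>z. z \<in> V j \<and> z \<in> T" if T: "y \<in> T" "openin X T" for T
        proof -
          obtain k where "k \<ge> j" "f (r k) \<in> T"
            using y(2)[OF T(2,1)] unfolding infinite_nat_iff_unbounded_le by auto
          then show ?thesis
            using r(2)[of k] V(4) by (auto simp: decseq_def)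
        qed
        then have "y \<in> X closure_of V j"
          using compactin_subset_topspace[OF K(1)] y(1) by (auto simp: in_closure_of)
        then show ?thesis
          using V(3) by blast
      qed
      ultimately show False
        using G(3) y(1) U by blast
    qed
  qed
  then show ?thesis
    using r(1) by blast
qed

lemma continuous_map_powertop_real_apply:
  "continuous_map (powertop_real UNIV) euclideanreal (\<lambda>g. g a)"
  by (metis UNIV_I continuous_map_product_coordinates)

lemma topspace_weak_star [simp]: "topspace weak_star = UNIV"
  by (simp add: weak_star_def topspace_pullback_topology PiE_UNIV_domain)

lemma openin_weak_star:
  "openin weak_star S \<longleftrightarrow> (\<exists>Q. openin (powertop_real UNIV) Q \<and> S = blinfun_apply -` Q)"
  by (simp add: weak_star_def openin_pullback_topology)

lemma continuous_map_weak_star_apply: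
  "continuous_map weak_star euclideanreal (\<lambda>y. blinfun_apply y a)"
proof -
  have "continuous_map weak_star euclideanreal ((\<lambda>g. g a) \<circ> blinfun_apply)"
    unfolding weak_star_def by (rule continuous_map_pullback) (rule continuous_map_powertop_real_apply)
  then show ?thesis by (simp add: o_def)
qed

lemma homeomorphic_map_weak_star:
  "homeomorphic_map weak_star (subtopology (powertop_real UNIV) (range blinfun_apply)) blinfun_apply"
proof (rule bijective_open_imp_homeomorphic_map)
  have "continuous_map weak_star (powertop_real UNIV) (id \<circ> blinfun_apply)"
    unfolding weak_star_def by (rule continuous_map_pullback) simp
  then show "continuous_map weak_star
      (subtopology (powertop_real UNIV) (range blinfun_apply)) blinfun_apply"
    by (simp add: continuous_map_in_subtopology)
  show "open_map weak_star (subtopology (powertop_real UNIV) (range blinfun_apply)) blinfun_apply"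
    unfolding open_map_def openin_weak_star
    by (auto simp: openin_subtopology_Int image_vimage_eq Int_commute)
qed (auto simp: inj_on_def blinfun_eqI)

lemma regular_space_weak_star: "regular_space weak_star"
  using homeomorphic_regular_space
      [OF homeomorphic_map_imp_homeomorphic_space[OF homeomorphic_map_weak_star]]
  by (simp add: regular_space_subtopology regular_space_product_topology regular_space_euclidean)

lemma closedin_additive_functions:
  "closedin (powertop_real UNIV) {g. \<forall>a b. g (a + b) = g a + g b}"
proof -
  have "{g. \<forall>a b. g (a + b) = g a + g b} =
        (\<Inter>a. \<Inter>b. {g \<in> topspace (powertop_real UNIV). g (a + b) = g a + g b})"
    by (auto simp: PiE_UNIV_domain)
  also have "closedin (powertop_real UNIV) \<dots>"
    by (intro closedin_INT closedin_continuous_maps_eq[of euclideanreal] continuous_map_add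
        continuous_map_powertop_real_apply) auto
  finally show ?thesis .
qed

lemma closedin_homogeneous_functions:
  "closedin (powertop_real UNIV) {g. \<forall>c a. g (c *\<^sub>R a) = c * g a}"
proof -
  have "{g. \<forall>c a. g (c *\<^sub>R a) = c * g a} =
        (\<Inter>c. \<Inter>a. {g \<in> topspace (powertop_real UNIV). g (c *\<^sub>R a) = c * g a})"
    by (auto simp: PiE_UNIV_domain)
  also have "closedin (powertop_real UNIV) \<dots>"
    by (intro closedin_INT closedin_continuous_maps_eq[of euclideanreal] continuous_map_real_mult_left
        continuous_map_powertop_real_apply) auto
  finally show ?thesis .
qed

lemma blinfun_apply_cball:
  fixes r :: real
  assumes "0 \<le> r"
  shows "blinfun_apply ` cball (0 :: 'a::real_normed_vector \<Rightarrow>\<^sub>L real) r =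
    (\<Pi>\<^sub>E a\<in>UNIV. cball 0 (r * norm a)) \<inter>
    {g. \<forall>a b. g (a + b) = g a + g b} \<inter> {g. \<forall>c a. g (c *\<^sub>R a) = c * g a}"
proof (intro equalityI subsetI)
  fix g :: "'a \<Rightarrow> real" assume "g \<in> blinfun_apply ` cball 0 r"
  then obtain y where y: "norm y \<le> r" "g = blinfun_apply y" by auto
  have "\<bar>g a\<bar> \<le> r * norm a" for a
    using norm_blinfun[of y a] mult_right_mono[OF y(1) norm_ge_zero[of a]] y(2) by simp
  then show "g \<in> (\<Pi>\<^sub>E a\<in>UNIV. cball 0 (r * norm a)) \<inter>
      {g. \<forall>a b. g (a + b) = g a + g b} \<inter> {g. \<forall>c a. g (c *\<^sub>R a) = c * g a}"
    by (simp add: y(2) PiE_iff blinfun.add_right blinfun.scaleR_right)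
next
  fix g :: "'a \<Rightarrow> real" assume g: "g \<in> (\<Pi>\<^sub>E a\<in>UNIV. cball 0 (r * norm a)) \<inter>
      {g. \<forall>a b. g (a + b) = g a + g b} \<inter> {g. \<forall>c a. g (c *\<^sub>R a) = c * g a}"
  then have bound: "norm (g a) \<le> norm a * r" for a
    by (auto simp: PiE_iff mult.commute)
  have "bounded_linear g"
    by (rule bounded_linear_intro[OF _ _ bound]) (use g in auto)
  then have "g = blinfun_apply (Blinfun g)" and "norm (Blinfun g) \<le> r"
    using bound
    by (auto simp: bounded_linear_Blinfun_apply mult.commute intro!: norm_blinfun_bound assms)
  then show "g \<in> blinfun_apply ` cball 0 r" by auto
qed

theorem compactin_weak_star_cball:
  "compactin weak_star (cball (0 :: 'a::real_normed_vector \<Rightarrow>\<^sub>L real) r)"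
proof (cases "r < 0")
  case False
  then have "0 \<le> r" by simp
  have box: "compactin (powertop_real UNIV) (\<Pi>\<^sub>E a\<in>UNIV. cball 0 (r * norm (a :: 'a)))"
    by (simp add: compactin_PiE)
  have "compactin (powertop_real UNIV) (blinfun_apply ` cball (0 :: 'a \<Rightarrow>\<^sub>L real) r)"
    unfolding blinfun_apply_cball[OF \<open>0 \<le> r\<close>]
    by (rule closed_compactin[OF box])
      (auto intro!: closedin_Int closedin_additive_functions closedin_homogeneous_functions
        simp: closedin_product_topology)
  then show ?thesis
    using homeomorphic_map_compactness[OF homeomorphic_map_weak_star, of "cball 0 r"]
    by (auto simp: compactin_subtopology)
qed simp

lemma openin_weak_star_halfspace: "openin weak_star {y. c < blinfun_apply y a}"
  using openin_continuous_map_preimage[OF continuous_map_weak_star_apply, of "{c<..}" a] by simp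

lemma duality_setI_norm_le:
  assumes "norm x = 1" "norm y \<le> 1" "1 \<le> blinfun_apply y x"
  shows "y \<in> duality_set x"
proof -
  have "blinfun_apply y x \<le> norm y"
    using norm_blinfun[of y x] assms(1) by simp
  then show ?thesis
    using assms(2,3) by (simp add: duality_set_def)
qed

theorem proposition2p2:
  fixes x :: "'a::banach"
    and xs :: "'a \<Rightarrow>\<^sub>L real"
    and xn :: "nat \<Rightarrow> ('a \<Rightarrow>\<^sub>L real)"
    and U :: "nat \<Rightarrow> ('a \<Rightarrow>\<^sub>L real) set"
  assumes "norm x = 1" and "norm xs = 1" and "blinfun_apply xs x = 1"
    and "\<And>n. norm (xn n) \<le> 1"
    and "\<And>V. openin weak_star V \<Longrightarrow> xs \<in> V \<Longrightarrow> infinite {n. xn n \<in> V}"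
    and "\<And>n. openin (subtopology weak_star (duality_set x)) (U n)"
    and "(\<Union>n. U n) = duality_set x - {xs}"
    and "(\<Union>n. weak_star closure_of (U n)) = duality_set x - {xs}"
  shows "\<exists>r. strict_mono r \<and> limitin weak_star (xn \<circ> r) xs sequentially"
proof -
  define G where "G j = {y. 1 - 1 / Suc j < blinfun_apply y x} - weak_star closure_of U j" for j
  have "openin weak_star (G j)" for j
    unfolding G_def by (intro openin_diff openin_weak_star_halfspace closedin_closure_of)
  moreover have "xs \<in> G j" for j
    using assms(3,8) by (auto simp: G_def)
  moreover have "cball 0 1 \<inter> (\<Inter>j. G j) \<subseteq> {xs}"
  proof
    fix y assume y: "y \<in> cball 0 1 \<inter> (\<Inter>j. G j)"
    have "1 \<le> blinfun_apply y x"
    proof (rule ccontr)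
      assume "\<not> 1 \<le> blinfun_apply y x"
      then obtain j where "1 / Suc j < 1 - blinfun_apply y x"
        using reals_Archimedean[of "1 - blinfun_apply y x"] by (auto simp: inverse_eq_divide)
      moreover have "1 - 1 / Suc j < blinfun_apply y x"
        using y by (simp add: G_def)
      ultimately show False
        by linarith
    qed
    then have "y \<in> duality_set x"
      using y assms(1) by (auto intro: duality_setI_norm_le)
    then show "y \<in> {xs}"
      using y assms(8) by (auto simp: G_def)
  qed
  ultimately show ?thesis
    using cluster_point_imp_limitin_subsequence
        [OF regular_space_weak_star compactin_weak_star_cball[of 1], where f = xn and G = G and a = xs]
      assms(4,5) by (auto simp: image_subset_iff)
qed

end
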